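(* Assume the setting described in the context, assume $L>1$, let $\xi=(\xi_1,\dots,\xi_{\ell_L})\in\mathbb R^{\ell_L}$, for $i,j\in\mathbb N_0$, $k\in\mathbb N$ let $\alpha_{i,j,k}=i\ell_{k-1}+j+\sum_{h=1}^{k-1}\ell_h(\ell_{h-1}+1)$, and let $\theta=(\theta_1,\dots,\theta_{\mathfrak d})$, $\vartheta=(\vartheta_1,\dots,\vartheta_{\mathfrak d})\in\mathbb R^{\mathfrak d}$ satisfy for all $i\in\{1,\dots,\ell_L\}$ and all $j\in\{1,\dots,\mathfrak d\}\setminus\big(\bigcup_{k=1}^{\ell_L}\{\alpha_{\ell_{L-1},1,L-1},\alpha_{0,1,L},\alpha_{\ell_L,k,L}\}\big)$ that $\theta_{\alpha_{\ell_{L-1},1,L-1}}=\vartheta_{\alpha_{0,1,L}}=1$, $\theta_{\alpha_{\ell_L,i,L}}=\vartheta_{\alpha_{\ell_L,i,L}}=\xi_i$, and $\theta_{\alpha_{0,1,L}}=\vartheta_{\alpha_{\ell_{L-1},1,L-1}}=\theta_j=\vartheta_j=0$. Then $\mathcal L_\infty(\theta)=\mathcal L_\infty(\vartheta)$ and $$\mathcal L_\infty\Big(\frac{\theta+\vartheta}2\Big)=\Big[\frac{\mathcal L_\infty(\theta)+\mathcal L_\infty(\vartheta)}2\Big]+\frac{\mathfrak m}{16}+\frac12\Big[\xi_1\mathfrak m-\int_{[a,b]^{\ell_0}}f_1(x)\,\mu(dx)\Big].$$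
   Context: Setting. Let $L,\mathfrak d\in\mathbb N=\{1,2,\dots\}$, $(\ell_k)_{k\in\mathbb N_0}\subseteq\mathbb N$, $a\in\mathbb R$, $b\in(a,\infty)$ with $\mathfrak d=\sum_{k=1}^L\ell_k(\ell_{k-1}+1)$; let $\mathbf d_k=\sum_{h=1}^k\ell_h(\ell_{h-1}+1)$ for $k\in\mathbb N_0$. For $\theta=(\theta_1,\dots,\theta_{\mathfrak d})\in\mathbb R^{\mathfrak d}$, $k\in\{1,\dots,L\}$, $i\in\{1,\dots,\ell_k\}$, $j\in\{1,\dots,\ell_{k-1}\}$ let $\mathfrak w^{k,\theta}_{i,j}=\theta_{(i-1)\ell_{k-1}+j+\mathbf d_{k-1}}$ and $\mathfrak b^{k,\theta}_i=\theta_{\ell_k\ell_{k-1}+i+\mathbf d_{k-1}}$, let $\mathfrak w^{k,\theta}=(\mathfrak w^{k,\theta}_{i,j})_{i,j}\in\mathbb R^{\ell_k\times\ell_{k-1}}$, $\mathfrak b^{k,\theta}=(\mathfrak b^{k,\theta}_1,\dots,\mathfrak b^{k,\theta}_{\ell_k})\in\mathbb R^{\ell_k}$, and $\mathcal A^\theta_k(x)=\mathfrak b^{k,\theta}+\mathfrak w^{k,\theta}x$. Let $\mathfrak M_\infty(x_1,\dots,x_n)=(\max\{x_1,0\},\dots,\max\{x_n,0\})$ and $\|\cdot\|$ the Euclidean norm. Define $\mathcal N^{k,\theta}_\infty\colon\mathbb R^{\ell_0}\to\mathbb R^{\ell_k}$, $k\in\{1,\dots,L\}$, by $\mathcal N^{1,\theta}_\infty=\mathcal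 A^\theta_1$ and $\mathcal N^{k+1,\theta}_\infty(x)=\mathcal A^\theta_{k+1}(\mathfrak M_\infty(\mathcal N^{k,\theta}_\infty(x)))$. Let $\mu$ be a measure on the Borel $\sigma$-algebra of $[a,b]^{\ell_0}$ with $\mathfrak m=\mu([a,b]^{\ell_0})\in\mathbb R$, let $f=(f_1,\dots,f_{\ell_L})\colon[a,b]^{\ell_0}\to\mathbb R^{\ell_L}$ be measurable, and let $\mathcal L_\infty\colon\mathbb R^{\mathfrak d}\to\mathbb R$, $\mathcal L_\infty(\theta)=\int_{[a,b]^{\ell_0}}\|\mathcal N^{L,\theta}_\infty(x)-f(x)\|^2\,\mu(dx)$ (these integrals are real numbers as part of the setting). *)

theory Defs
  imports "HOL-Analysis.Analysis"
begin

text \<open>Vectors in R^n are represented as functions nat => real, using the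
coordinates 1..n. Parameter vectors theta in R^d likewise use coordinates 1..d.\<close>

definition dsum :: "(nat \<Rightarrow> nat) \<Rightarrow> nat \<Rightarrow> nat" where
  "dsum l k = (\<Sum>h=1..k. l h * (l (h - 1) + 1))"

definition wgt :: "(nat \<Rightarrow> nat) \<Rightarrow> nat \<Rightarrow> (nat \<Rightarrow> real) \<Rightarrow> nat \<Rightarrow> nat \<Rightarrow> real" where
  "wgt l k \<theta> i j = \<theta> ((i - 1) * l (k - 1) + j + dsum l (k - 1))"

definition bias :: "(nat \<Rightarrow> nat) \<Rightarrow> nat \<Rightarrow> (nat \<Rightarrow> real) \<Rightarrow> nat \<Rightarrow> real" where
  "bias l k \<theta> i = \<theta> (l k * l (k - 1) + i + dsum l (k - 1))"

definition affine :: "(nat \<Rightarrow> nat) \<Rightarrow> nat \<Rightarrow> (nat \<Rightarrow> real) \<Rightarrow> (nat \<Rightarrow> real) \<Rightarrow> (nat \<Rightarrow> real)" where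
  "affine l k \<theta> x = (\<lambda>i. bias l k \<theta> i + (\<Sum>j=1..l (k - 1). wgt l k \<theta> i j * x j))"

definition relu :: "(nat \<Rightarrow> real) \<Rightarrow> (nat \<Rightarrow> real)" where
  "relu x = (\<lambda>i. max (x i) 0)"

text \<open>Realization N^{k,theta}; the case k = 0 is an unused convention.\<close>
fun realization :: "(nat \<Rightarrow> nat) \<Rightarrow> nat \<Rightarrow> (nat \<Rightarrow> real) \<Rightarrow> (nat \<Rightarrow> real) \<Rightarrow> (nat \<Rightarrow> real)" where
  "realization l 0 \<theta> x = x"
| "realization l (Suc 0) \<theta> x = affine l 1 \<theta> x"
| "realization l (Suc (Suc k)) \<theta> x = affine l (Suc (Suc k)) \<theta> (relu (realization l (Suc k) \<theta> x))"

definition sqerr :: "(nat \<Rightarrow> nat) \<Rightarrow> nat \<Rightarrow> ((nat \<Rightarrow> real) \<Rightarrow> nat \<Rightarrow> real) \<Rightarrow> (nat \<Rightarrow> real) \<Rightarrow> (nat \<Rightarrow> real) \<Rightarrow> real" where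
  "sqerr l L f \<theta> x = (\<Sum>i=1..l L. (realization l L \<theta> x i - f x i)\<^sup>2)"

definition loss :: "(nat \<Rightarrow> nat) \<Rightarrow> nat \<Rightarrow> (nat \<Rightarrow> real) measure \<Rightarrow> ((nat \<Rightarrow> real) \<Rightarrow> nat \<Rightarrow> real) \<Rightarrow> (nat \<Rightarrow> real) \<Rightarrow> real" where
  "loss l L \<mu> f \<theta> = (\<integral>x. sqerr l L f \<theta> x \<partial>\<mu>)"

definition alpha :: "(nat \<Rightarrow> nat) \<Rightarrow> nat \<Rightarrow> nat \<Rightarrow> nat \<Rightarrow> nat" where
  "alpha l i j k = i * l (k - 1) + j + (\<Sum>h=1..k - 1. l h * (l (h - 1) + 1))"

end

theory Submission
  imports Defs
begin

text \<open>A parameter vector whose only nonzero entries are the bias c of the first neuron of layer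
  L-1, the weight w from that neuron to the first output and the output biases \<xi> realizes the
  constant function \<xi> + w max(c,0) e_1. Thus \<theta> (c = 1, w = 0) and \<theta>' (c = 0, w = 1) both realize
  \<xi>, whereas their midpoint (c = w = 1/2) realizes \<xi> + e_1/4; expanding the square in the first
  output coordinate produces the extra terms m/16 and (\<xi>_1 m - \<integral> f_1)/2.\<close>

lemma alpha_eq_dsum: "alpha l i j k = i * l (k - 1) + j + dsum l (k - 1)"
  by (simp add: alpha_def dsum_def)

lemma wgt_eq_alpha: "wgt l k \<eta> i j = \<eta> (alpha l (i - 1) j k)"
  by (simp add: wgt_def alpha_eq_dsum)

lemma bias_eq_alpha: "bias l k \<eta> i = \<eta> (alpha l (l k) i k)"
  by (simp add: bias_def alpha_eq_dsum mult.commute)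

lemma dsum_Suc: "dsum l (Suc k) = dsum l k + l (Suc k) * (l k + 1)"
  by (simp add: dsum_def)

lemma row_major_index_le:
  fixes p q m n :: nat
  assumes "1 \<le> p" "p \<le> n" "q \<le> m"
  shows "(p - 1) * m + q \<le> n * m"
proof -
  have "(p - 1) * m + q \<le> p * m"
    using assms by (cases p) auto
  also have "\<dots> \<le> n * m"
    using assms by simp
  finally show ?thesis .
qed

lemma row_major_index_eq_1:
  fixes p q m :: nat
  assumes "1 \<le> p" "1 \<le> q" "1 \<le> m" "(p - 1) * m + q = 1"
  shows "p = 1 \<and> q = 1"
  using assms by (cases "p - 1") auto

lemma affine_eq_bias:
  assumes "\<forall>j\<in>{1..l (k - 1)}. wgt l k \<eta> i j = 0"
  shows "affine l k \<eta> y i = bias l k \<eta> i"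
  using assms by (simp add: affine_def)

lemma realization_eq_bias:
  assumes "1 \<le> k" "\<forall>j\<in>{1..l (k - 1)}. wgt l k \<eta> i j = 0"
  shows "realization l k \<eta> x i = bias l k \<eta> i"
proof -
  obtain k' where k: "k = Suc k'"
    using assms(1) by (cases k) auto
  show ?thesis
    using affine_eq_bias[OF assms(2)] by (cases k') (simp_all add: k)
qed

definition single_path_param ::
    "(nat \<Rightarrow> nat) \<Rightarrow> nat \<Rightarrow> real \<Rightarrow> real \<Rightarrow> (nat \<Rightarrow> real) \<Rightarrow> (nat \<Rightarrow> real) \<Rightarrow> bool" where
  "single_path_param l L c w \<xi> \<eta> \<longleftrightarrow>
     \<eta> (alpha l (l (L - 1)) 1 (L - 1)) = c \<and> \<eta> (alpha l 0 1 L) = w \<and>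
     (\<forall>i\<in>{1..l L}. \<eta> (alpha l (l L) i L) = \<xi> i) \<and>
     (\<forall>j\<in>{1..dsum l L} -
        (\<Union>k\<in>{1..l L}. {alpha l (l (L - 1)) 1 (L - 1), alpha l 0 1 L, alpha l (l L) k L}). \<eta> j = 0)"

lemma single_path_param_midpoint:
  assumes "single_path_param l L c w \<xi> \<eta>" "single_path_param l L c' w' \<xi> \<eta>'"
  shows "single_path_param l L ((c + c') / 2) ((w + w') / 2) \<xi> (\<lambda>j. (\<eta> j + \<eta>' j) / 2)"
  using assms unfolding single_path_param_def by auto

lemma realization_single_path_param:
  assumes l_pos: "\<forall>k. l k \<ge> 1" and "1 < L" and \<eta>: "single_path_param l L c w \<xi> \<eta>"
    and i: "i \<in> {1..l L}"
  shows "realization l L \<eta> x i = \<xi> i + (if i = 1 then w * max c 0 else 0)"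
proof -
  obtain K where L: "L = Suc (Suc K)"
    using \<open>1 < L\<close> by (auto dest!: less_imp_Suc_add)
  define n0 n1 n2 where "n0 = l K" and "n1 = l (Suc K)" and "n2 = l L"
  define P D where "P = dsum l K" and "D = dsum l (Suc K)"
  have n: "1 \<le> n0" "1 \<le> n1" "1 \<le> n2"
    using l_pos by (auto simp: n0_def n1_def n2_def)
  have D: "D = P + n1 * n0 + n1"
    by (simp add: D_def P_def dsum_Suc n0_def n1_def)
  have pos: "alpha l (l (L - 1)) 1 (L - 1) = P + n1 * n0 + 1" "alpha l 0 1 L = D + 1"
      "alpha l (l L) k L = D + n2 * n1 + k" for k
    by (simp_all add: alpha_eq_dsum L n0_def n1_def n2_def P_def D_def)
  have "dsum l L = D + n2 * n1 + n2"
    by (simp add: L D_def dsum_Suc n1_def n2_def)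
  then have c: "\<eta> (P + n1 * n0 + 1) = c" and w: "\<eta> (D + 1) = w"
    and \<xi>: "\<forall>k\<in>{1..n2}. \<eta> (D + n2 * n1 + k) = \<xi> k"
    and zero: "\<And>j. \<lbrakk>1 \<le> j; j \<le> D + n2 * n1; j \<noteq> P + n1 * n0 + 1; j \<noteq> D + 1\<rbrakk> \<Longrightarrow> \<eta> j = 0"
    using \<eta> n(3) unfolding single_path_param_def pos by (auto simp: n2_def)
  have hidden: "realization l (Suc K) \<eta> x p = (if p = 1 then c else 0)" if p: "p \<in> {1..n1}" for p
  proof -
    have "wgt l (Suc K) \<eta> p q = 0" if "q \<in> {1..n0}" for q
      using row_major_index_le[of p n1 q n0] p that n D
      by (simp add: wgt_eq_alpha alpha_eq_dsum n0_def P_def zero)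
    then have "realization l (Suc K) \<eta> x p = \<eta> (P + n1 * n0 + p)"
      by (simp add: realization_eq_bias bias_eq_alpha alpha_eq_dsum n0_def n1_def P_def ac_simps)
    then show ?thesis
      using p c n D by (auto simp: zero)
  qed
  have output_wgt: "wgt l L \<eta> i q = (if i = 1 \<and> q = 1 then w else 0)" if q: "q \<in> {1..n1}" for q
  proof -
    have wgt: "wgt l L \<eta> i q = \<eta> (D + ((i - 1) * n1 + q))"
      by (simp add: wgt_eq_alpha alpha_eq_dsum L n1_def D_def ac_simps)
    show ?thesis
    proof (cases "i = 1 \<and> q = 1")
      case True
      then show ?thesis
        using w wgt by simp
    next
      case False
      then have "(i - 1) * n1 + q \<noteq> 1"
        using row_major_index_eq_1[of i q n1] i q n by auto
      moreover have "(i - 1) * n1 + q \<le> n2 * n1"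
        using row_major_index_le[of i n2 q n1] i q by (simp add: n2_def)
      ultimately show ?thesis
        using False q D wgt by (auto intro!: zero)
    qed
  qed
  have "realization l L \<eta> x i
      = bias l L \<eta> i + (\<Sum>q=1..n1. wgt l L \<eta> i q * max (realization l (Suc K) \<eta> x q) 0)"
    by (simp add: L affine_def relu_def n1_def)
  also have "(\<Sum>q=1..n1. wgt l L \<eta> i q * max (realization l (Suc K) \<eta> x q) 0)
      = (\<Sum>q=1..n1. if q = 1 then (if i = 1 then w * max c 0 else 0) else 0)"
    by (rule sum.cong) (auto simp: output_wgt hidden)
  finally show ?thesis
    using \<xi> i n by (simp add: bias_eq_alpha pos n2_def)
qed

lemma sqerr_single_path_param:
  assumes "\<forall>k. l k \<ge> 1" "1 < L" "single_path_param l L c w \<xi> \<eta>"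
  defines "t \<equiv> w * max c 0"
  shows "sqerr l L f \<eta> x
    = (\<Sum>i=1..l L. (\<xi> i - f x i)\<^sup>2) + t\<^sup>2 + 2 * t * (\<xi> 1 - f x 1)"
proof -
  have "sqerr l L f \<eta> x
      = (\<Sum>i=1..l L. (\<xi> i - f x i)\<^sup>2 + (if i = 1 then t\<^sup>2 + 2 * t * (\<xi> 1 - f x 1) else 0))"
    unfolding sqerr_def
    by (rule sum.cong) (auto simp: realization_single_path_param[OF assms(1-3)] t_def power2_eq_square
        algebra_simps)
  then show ?thesis
    using assms(1) by (simp add: sum.distrib)
qed

lemma loss_single_path_param:
  assumes "finite_measure \<mu>" "\<forall>k. l k \<ge> 1" "1 < L"
    and \<eta>: "single_path_param l L c w \<xi> \<eta>" and \<eta>\<^sub>0: "single_path_param l L c\<^sub>0 0 \<xi> \<eta>\<^sub>0"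
    and "integrable \<mu> (sqerr l L f \<eta>)" "integrable \<mu> (sqerr l L f \<eta>\<^sub>0)"
  defines "t \<equiv> w * max c 0" and "m \<equiv> measure \<mu> (space \<mu>)"
  shows "loss l L \<mu> f \<eta>
    = loss l L \<mu> f \<eta>\<^sub>0 + t\<^sup>2 * m + 2 * t * (\<xi> 1 * m - (\<integral>x. f x 1 \<partial>\<mu>))"
proof -
  interpret finite_measure \<mu>
    by fact
  have sq: "sqerr l L f \<eta> = (\<lambda>x. sqerr l L f \<eta>\<^sub>0 x + (t\<^sup>2 + 2 * t * (\<xi> 1 - f x 1)))"
    using sqerr_single_path_param[OF assms(2,3) \<eta>] sqerr_single_path_param[OF assms(2,3) \<eta>\<^sub>0]
    by (simp add: t_def fun_eq_iff)
  show ?thesis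
  proof (cases "t = 0")
    case True
    then show ?thesis
      by (simp add: loss_def sq)
  next
    case False
    \<comment> \<open>f_1 is not assumed integrable: it is recovered from the difference of two squared errors.\<close>
    have "integrable \<mu> (\<lambda>x. sqerr l L f \<eta> x - sqerr l L f \<eta>\<^sub>0 x)"
      using assms(6,7) by (rule Bochner_Integration.integrable_diff)
    then have "integrable \<mu> (\<lambda>x. \<xi> 1 + t / 2 - (t\<^sup>2 + 2 * t * (\<xi> 1 - f x 1)) / (2 * t))"
      by (simp add: sq)
    also have "(\<lambda>x. \<xi> 1 + t / 2 - (t\<^sup>2 + 2 * t * (\<xi> 1 - f x 1)) / (2 * t)) = (\<lambda>x. f x 1)"
      using False by (simp add: fun_eq_iff power2_eq_square field_simps)
    finally have "integrable \<mu> (\<lambda>x. f x 1)" .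
    then show ?thesis
      using assms(7) by (simp add: loss_def sq m_def algebra_simps)
  qed
qed

theorem proposition2p17:
  fixes L d :: nat and l :: "nat \<Rightarrow> nat" and a b :: real
    and \<mu> :: "(nat \<Rightarrow> real) measure" and f :: "(nat \<Rightarrow> real) \<Rightarrow> nat \<Rightarrow> real"
    and \<xi> \<theta> \<theta>' :: "nat \<Rightarrow> real"
  assumes l_pos: "\<forall>k. l k \<ge> 1"
    and L_gt: "L > 1"
    and d_def: "d = (\<Sum>k=1..L. l k * (l (k - 1) + 1))"
    and ab: "a < b"
    and sets_mu: "sets \<mu> = sets (restrict_space (Pi\<^sub>M {1..l 0} (\<lambda>_. borel)) ({1..l 0} \<rightarrow>\<^sub>E {a..b}))"
    and fin: "emeasure \<mu> (space \<mu>) < \<infinity>"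
    and f_meas: "\<forall>i\<in>{1..l L}. (\<lambda>x. f x i) \<in> borel_measurable \<mu>"
    and integr: "\<forall>\<eta>. integrable \<mu> (sqerr l L f \<eta>)"
    and h1: "\<theta> (alpha l (l (L - 1)) 1 (L - 1)) = 1"
    and h2: "\<theta>' (alpha l 0 1 L) = 1"
    and h3: "\<forall>i\<in>{1..l L}. \<theta> (alpha l (l L) i L) = \<xi> i \<and> \<theta>' (alpha l (l L) i L) = \<xi> i"
    and h4: "\<theta> (alpha l 0 1 L) = 0"
    and h5: "\<theta>' (alpha l (l (L - 1)) 1 (L - 1)) = 0"
    and h6: "\<forall>j\<in>{1..d} - (\<Union>k\<in>{1..l L}. {alpha l (l (L - 1)) 1 (L - 1), alpha l 0 1 L, alpha l (l L) k L}).
               \<theta> j = 0 \<and> \<theta>' j = 0"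
  shows "loss l L \<mu> f \<theta> = loss l L \<mu> f \<theta>' \<and>
         loss l L \<mu> f (\<lambda>j. (\<theta> j + \<theta>' j) / 2)
           = (loss l L \<mu> f \<theta> + loss l L \<mu> f \<theta>') / 2 + measure \<mu> (space \<mu>) / 16
             + (\<xi> 1 * measure \<mu> (space \<mu>) - (\<integral>x. f x 1 \<partial>\<mu>)) / 2"
proof -
  have "d = dsum l L"
    by (simp add: d_def dsum_def)
  then have \<theta>: "single_path_param l L 1 0 \<xi> \<theta>" and \<theta>': "single_path_param l L 0 1 \<xi> \<theta>'"
    using h1 h2 h3 h4 h5 h6 by (simp_all add: single_path_param_def)
  have "sqerr l L f \<theta> = sqerr l L f \<theta>'"
    using sqerr_single_path_param[OF l_pos L_gt \<theta>] sqerr_single_path_param[OF l_pos L_gt \<theta>']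
    by (simp add: fun_eq_iff)
  then have "loss l L \<mu> f \<theta> = loss l L \<mu> f \<theta>'"
    by (simp add: loss_def)
  moreover have "finite_measure \<mu>"
    using fin by (intro finite_measureI) simp
  then have "loss l L \<mu> f (\<lambda>j. (\<theta> j + \<theta>' j) / 2) = loss l L \<mu> f \<theta>
      + (1/4)\<^sup>2 * measure \<mu> (space \<mu>) + 2 * (1/4) * (\<xi> 1 * measure \<mu> (space \<mu>) - (\<integral>x. f x 1 \<partial>\<mu>))"
    using loss_single_path_param[OF _ l_pos L_gt single_path_param_midpoint[OF \<theta> \<theta>'] \<theta>] integr
    by simp
  ultimately show ?thesis
    by (simp add: power2_eq_square field_simps)
qed

end
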